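(* Let $\vec{\mathcal G}=([n],E)$ be a directed graph with $m=|E|$ edges in which every vertex has at least one outgoing edge and which has a single strongly connected component. Let the weights $(r_{ij})_{(i,j)\in E}$ be independent absolutely continuous random variables with densities $f_{ij}$ satisfying $f_{ij}(y)\le\phi$ for all $(i,j)$ and $y$, for some $\phi>0$. Let $\delta=1/(2n^2m\phi)$. Then $$\mathbb P\bigl(\exists \text{ a cycle } C:\ B_1(r,\delta)\subseteq\mathcal P^{C}\bigr)\ge 1-\frac1n,$$ where $B_1(r,\delta)=\{\tilde r\in\mathbb R^m:\|r-\tilde r\|_1\le\delta\}$.
   Context: The mean weight of a directed cycle is the sum of its edge weights divided by its number of edges. For a directed cycle $C$, $\mathcal P^{C}$ is the set of $r\in\mathbb R^m$ such that $C$ is the unique cycle of minimum mean weight in $\vec{\mathcal G}$ with weights $r$. *)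

theory Defs
  imports "HOL-Probability.Probability"
begin

type_synonym edge = "nat \<times> nat"

text \<open>A directed cycle of the graph with edge set E, identified with its edge set:
  a nonempty list of distinct vertices v_0,...,v_{k-1} with edges (v_i, v_{i+1 mod k}) in E.\<close>
definition cycle_edges :: "nat list \<Rightarrow> edge set" where
  "cycle_edges vs = {(vs ! i, vs ! ((i + 1) mod length vs)) | i. i < length vs}"

definition is_cycle :: "edge set \<Rightarrow> edge set \<Rightarrow> bool" where
  "is_cycle E C \<longleftrightarrow> (\<exists>vs. vs \<noteq> [] \<and> distinct vs \<and> C = cycle_edges vs \<and> C \<subseteq> E)"

definition mean_weight :: "(edge \<Rightarrow> real) \<Rightarrow> edge set \<Rightarrow> real" where
  "mean_weight r C = (\<Sum>e\<in>C. r e) / real (card C)"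

definition PC :: "edge set \<Rightarrow> edge set \<Rightarrow> (edge \<Rightarrow> real) set" where
  "PC E C = {r. is_cycle E C \<and>
      (\<forall>C'. is_cycle E C' \<and> C' \<noteq> C \<longrightarrow> mean_weight r C < mean_weight r C')}"

text \<open>Closed l1-ball of radius d around r in R^E (only coordinates in E matter).\<close>
definition ball1 :: "edge set \<Rightarrow> (edge \<Rightarrow> real) \<Rightarrow> real \<Rightarrow> (edge \<Rightarrow> real) set" where
  "ball1 E r d = {r'. (\<Sum>e\<in>E. \<bar>r e - r' e\<bar>) \<le> d}"

end

theory Submission
  imports Defs
begin

text \<open>Suppose no cycle is the unique minimum-mean cycle for all weights in the \<open>\<ell>\<^sub>1\<close>-ball of
  radius \<open>\<delta>\<close> around \<open>r\<close>. A perturbation of \<open>\<ell>\<^sub>1\<close>-size \<open>\<delta>\<close> changes the difference of two mean weights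
  by at most \<open>\<delta>\<close>, so a minimum-mean cycle has a competitor whose mean weight is within \<open>\<delta>\<close> of
  it, and an edge \<open>e\<close> used by exactly one of the two is a near tie: the least mean weight of a
  cycle through \<open>e\<close> and of a cycle avoiding \<open>e\<close> differ by at most \<open>\<delta>\<close>. With all other weights
  fixed, the second quantity does not depend on \<open>r\<^sub>e\<close>, while the first grows with slope at least
  \<open>1/n\<close> in \<open>r\<^sub>e\<close>; hence the near-tie values of \<open>r\<^sub>e\<close> form a set of diameter at most \<open>2n\<delta>\<close>, whose
  probability is at most \<open>2n\<delta>\<phi>\<close> by independence. A union bound over the \<open>m\<close> edges gives
  failure probability at most \<open>2nm\<delta>\<phi> = 1/n\<close>.\<close>

section \<open>Cycles\<close>

lemma cycle_edges_eq_image: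
  "cycle_edges vs = (\<lambda>i. (vs ! i, vs ! ((i + 1) mod length vs))) ` {..<length vs}"
  unfolding cycle_edges_def by auto

lemma is_cycle_subset: "is_cycle E C \<Longrightarrow> C \<subseteq> E"
  unfolding is_cycle_def by blast

lemma is_cycle_finite: "is_cycle E C \<Longrightarrow> finite C"
  unfolding is_cycle_def cycle_edges_eq_image by auto

lemma is_cycle_card_pos: "is_cycle E C \<Longrightarrow> card C > 0"
  unfolding is_cycle_def cycle_edges_eq_image by (auto simp: card_gt_0_iff)

lemma is_cycle_card_le:
  assumes "is_cycle E C" "E \<subseteq> {..<n} \<times> {..<n}"
  shows "card C \<le> n"
proof -
  obtain vs where vs: "distinct vs" "C = cycle_edges vs" "C \<subseteq> E"
    using assms(1) unfolding is_cycle_def by blast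
  have "set vs \<subseteq> {..<n}"
  proof
    fix v assume "v \<in> set vs"
    then obtain i where "i < length vs" "v = vs ! i" by (auto simp: in_set_conv_nth)
    then have "(v, vs ! ((i + 1) mod length vs)) \<in> E"
      using vs(2,3) unfolding cycle_edges_eq_image by auto
    then show "v \<in> {..<n}" using assms(2) by auto
  qed
  then have "length vs \<le> n"
    using card_mono[of "{..<n}" "set vs"] distinct_card[OF vs(1)] by auto
  moreover have "card C \<le> length vs"
    using vs(2) card_image_le[of "{..<length vs}"] unfolding cycle_edges_eq_image by auto
  ultimately show ?thesis by simp
qed

lemma finite_cycles: "finite E \<Longrightarrow> finite {C. is_cycle E C}"
  using is_cycle_subset by (blast intro: finite_subset[of _ "Pow E"])

lemma is_cycle_walk_segment:
  assumes walk: "\<And>k. (w k, w (Suc k)) \<in> E"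
    and "i < j" "w i = w j" and inj: "inj_on w {i..<j}"
  shows "is_cycle E (cycle_edges (map w [i..<j]))"
  unfolding is_cycle_def
proof (intro exI conjI)
  let ?vs = "map w [i..<j]"
  show "?vs \<noteq> []" "distinct ?vs" using assms(2) inj by (auto simp: distinct_map)
  show "cycle_edges ?vs \<subseteq> E"
  proof
    fix p assume "p \<in> cycle_edges ?vs"
    then obtain k where k: "k < j - i" "p = (?vs ! k, ?vs ! ((k + 1) mod (j - i)))"
      unfolding cycle_edges_def by auto
    show "p \<in> E"
    proof (cases "k + 1 < j - i")
      case True
      then show ?thesis using k walk[of "i + k"] by simp
    next
      case False
      then have "Suc k = j - i" "Suc (i + k) = j" using k by simp_all
      then show ?thesis using k walk[of "i + k"] assms(3) by simp
    qed
  qed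
qed simp

lemma exists_cycle:
  assumes E: "E \<subseteq> {..<n} \<times> {..<n}" and "n \<ge> 1" and out: "\<forall>i<n. \<exists>j. (i, j) \<in> E"
  shows "\<exists>C. is_cycle E C"
proof -
  define succ where "succ v = (SOME j. (v, j) \<in> E)" for v
  have succ: "(v, succ v) \<in> E" if "v < n" for v
    using out that unfolding succ_def by (meson someI_ex)
  define w where "w k = (succ ^^ k) 0" for k
  have w_lt: "w k < n" for k
    by (induction k) (use \<open>n \<ge> 1\<close> succ E in \<open>auto simp: w_def\<close>)
  have walk: "(w k, w (Suc k)) \<in> E" for k
    using succ[OF w_lt[of k]] by (simp add: w_def)
  have "\<not> inj_on w {..n}"
  proof
    assume "inj_on w {..n}"
    then have "card (w ` {..n}) = Suc n" by (simp add: card_image)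
    moreover have "w ` {..n} \<subseteq> {..<n}" using w_lt by auto
    ultimately show False using card_mono[of "{..<n}" "w ` {..n}"] by simp
  qed
  then have repeat: "\<exists>j. \<exists>i<j. w i = w j"
    unfolding inj_on_def by (metis linorder_neqE_nat)
  \<comment> \<open>the first return of the walk to a vertex it has already visited\<close>
  define j where "j = (LEAST j. \<exists>i<j. w i = w j)"
  obtain i where ij: "i < j" "w i = w j"
    using LeastI_ex[OF repeat] unfolding j_def by blast
  have "w x \<noteq> w y" if "x < y" "y < j" for x y
    using that not_less_Least[of y "\<lambda>j. \<exists>i<j. w i = w j"] unfolding j_def by blast
  then have "inj_on w {i..<j}"
    by (intro inj_onI) (metis atLeastLessThan_iff linorder_neqE_nat)
  then show ?thesis using is_cycle_walk_segment[OF walk ij] by blast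
qed

section \<open>Mean weights under \<open>\<ell>\<^sub>1\<close>-perturbations\<close>

lemma mean_weight_cong: "(\<And>e. e \<in> C \<Longrightarrow> r e = r' e) \<Longrightarrow> mean_weight r C = mean_weight r' C"
  unfolding mean_weight_def by (simp cong: sum.cong)

lemma mean_weight_fun_upd:
  assumes "e \<in> C" "finite C"
  shows "mean_weight (r(e := t')) C = mean_weight (r(e := t)) C + (t' - t) / real (card C)"
  using assms unfolding mean_weight_def by (simp add: sum.remove add_divide_distrib[symmetric])

lemma mean_weight_eq_sum:
  assumes "C \<subseteq> E" "finite E"
  shows "mean_weight r C = (\<Sum>e\<in>E. r e * indicator C e / real (card C))"
proof -
  have "(\<Sum>e\<in>E. r e * indicator C e / real (card C)) = (\<Sum>e\<in>E \<inter> C. r e / real (card C))"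
    by (subst sum.inter_restrict) (use assms in \<open>auto intro: sum.cong simp: indicator_def\<close>)
  also have "E \<inter> C = C" using assms by auto
  finally show ?thesis unfolding mean_weight_def by (simp add: sum_divide_distrib)
qed

definition gap_coeff :: "edge set \<Rightarrow> edge set \<Rightarrow> edge \<Rightarrow> real" where
  "gap_coeff C C' e = indicator C' e / real (card C') - indicator C e / real (card C)"

definition gap_norm :: "edge set \<Rightarrow> edge set \<Rightarrow> edge set \<Rightarrow> real" where
  "gap_norm E C C' = Max ((\<lambda>e. \<bar>gap_coeff C C' e\<bar>) ` E)"

lemma mean_weight_gap_eq:
  assumes "C \<subseteq> E" "C' \<subseteq> E" "finite E"
  shows "mean_weight r' C' - mean_weight r' C =
     mean_weight r C' - mean_weight r C + (\<Sum>e\<in>E. (r' e - r e) * gap_coeff C C' e)"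
  using assms by (simp add: mean_weight_eq_sum gap_coeff_def sum_subtractf[symmetric]
      sum.distrib[symmetric] algebra_simps diff_divide_distrib add_divide_distrib)

lemma abs_gap_coeff_le_1: "\<bar>gap_coeff C C' e\<bar> \<le> 1"
proof -
  have "0 \<le> indicator A e / real (card A)" "indicator A e / real (card A) \<le> (1::real)" for A
    by (auto simp: indicator_def divide_le_eq)
  then show ?thesis unfolding gap_coeff_def by (smt (verit))
qed

lemma gap_norm_le_1: "finite E \<Longrightarrow> E \<noteq> {} \<Longrightarrow> gap_norm E C C' \<le> 1"
  unfolding gap_norm_def using abs_gap_coeff_le_1 by simp

lemma abs_gap_coeff_le_gap_norm: "finite E \<Longrightarrow> e \<in> E \<Longrightarrow> \<bar>gap_coeff C C' e\<bar> \<le> gap_norm E C C'"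
  unfolding gap_norm_def by simp

lemma ball1_mean_weight_less:
  assumes "C \<subseteq> E" "C' \<subseteq> E" "finite E" "E \<noteq> {}"
    and gap: "\<delta> * gap_norm E C C' < mean_weight r C' - mean_weight r C"
    and r': "r' \<in> ball1 E r \<delta>"
  shows "mean_weight r' C < mean_weight r' C'"
proof -
  have "0 \<le> gap_norm E C C'"
    using abs_gap_coeff_le_gap_norm[OF \<open>finite E\<close>] \<open>E \<noteq> {}\<close> by (meson abs_ge_zero ex_in_conv order_trans)
  have "\<bar>\<Sum>e\<in>E. (r' e - r e) * gap_coeff C C' e\<bar> \<le> (\<Sum>e\<in>E. \<bar>r e - r' e\<bar> * gap_norm E C C')"
    using abs_gap_coeff_le_gap_norm[OF \<open>finite E\<close>]
    by (intro order_trans[OF sum_abs] sum_mono) (simp add: abs_mult abs_minus_commute mult_left_mono)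
  also have "\<dots> = (\<Sum>e\<in>E. \<bar>r e - r' e\<bar>) * gap_norm E C C'"
    by (simp add: sum_distrib_right)
  also have "\<dots> \<le> \<delta> * gap_norm E C C'"
    using r' \<open>0 \<le> gap_norm E C C'\<close> unfolding ball1_def by (simp add: mult_right_mono)
  finally show ?thesis using mean_weight_gap_eq[OF assms(1-3), of r' r] gap by linarith
qed

lemma gap_less_if_ball1_mean_weight_less:
  assumes "C \<subseteq> E" "C' \<subseteq> E" "finite E" "E \<noteq> {}" "\<delta> \<ge> 0"
    and less: "\<forall>r'\<in>ball1 E r \<delta>. mean_weight r' C < mean_weight r' C'"
  shows "\<delta> * gap_norm E C C' < mean_weight r C' - mean_weight r C"
proof -
  have "gap_norm E C C' \<in> (\<lambda>e. \<bar>gap_coeff C C' e\<bar>) ` E"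
    unfolding gap_norm_def using assms(3,4) by (intro Max_in) auto
  then obtain e0 where e0: "e0 \<in> E" "gap_norm E C C' = \<bar>gap_coeff C C' e0\<bar>"
    by blast
  \<comment> \<open>the worst perturbation moves the coordinate of largest coefficient by \<open>\<delta>\<close> against its sign\<close>
  define s where "s = sgn (gap_coeff C C' e0)"
  define r' where "r' = r(e0 := r e0 - s * \<delta>)"
  have "(\<Sum>e\<in>E. \<bar>r e - r' e\<bar>) = (\<Sum>e\<in>E. if e = e0 then \<bar>s\<bar> * \<delta> else 0)"
    using \<open>\<delta> \<ge> 0\<close> by (intro sum.cong) (auto simp: r'_def abs_mult)
  also have "\<dots> \<le> \<delta>" using e0(1) \<open>finite E\<close> \<open>\<delta> \<ge> 0\<close> by (auto simp: s_def abs_sgn_eq)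
  finally have "r' \<in> ball1 E r \<delta>" unfolding ball1_def by simp
  then have "mean_weight r' C < mean_weight r' C'" using less by blast
  moreover have "(\<Sum>e\<in>E. (r' e - r e) * gap_coeff C C' e) =
      (\<Sum>e\<in>E. if e = e0 then - \<delta> * (s * gap_coeff C C' e0) else 0)"
    by (intro sum.cong) (auto simp: r'_def)
  moreover have "s * gap_coeff C C' e0 = gap_norm E C C'"
    using e0(2) by (auto simp: s_def sgn_if)
  ultimately show ?thesis using mean_weight_gap_eq[OF assms(1-3), of r' r] e0(1) \<open>finite E\<close> by simp
qed

lemma ball1_subset_PC_iff:
  assumes "finite E" "E \<noteq> {}" "\<delta> \<ge> 0"
  shows "ball1 E r \<delta> \<subseteq> PC E C \<longleftrightarrow> is_cycle E C \<and>
    (\<forall>C'. is_cycle E C' \<and> C' \<noteq> C \<longrightarrow> \<delta> * gap_norm E C C' < mean_weight r C' - mean_weight r C)"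
proof
  assume sub: "ball1 E r \<delta> \<subseteq> PC E C"
  have "r \<in> ball1 E r \<delta>" using assms(3) unfolding ball1_def by simp
  then have "is_cycle E C" using sub unfolding PC_def by auto
  moreover have "\<delta> * gap_norm E C C' < mean_weight r C' - mean_weight r C"
    if "is_cycle E C'" "C' \<noteq> C" for C'
  proof (rule gap_less_if_ball1_mean_weight_less)
    show "C \<subseteq> E" "C' \<subseteq> E" using \<open>is_cycle E C\<close> that(1) by (simp_all add: is_cycle_subset)
    show "\<forall>r'\<in>ball1 E r \<delta>. mean_weight r' C < mean_weight r' C'"
      using sub that unfolding PC_def by blast
  qed (use assms in auto)
  ultimately show "is_cycle E C \<and> (\<forall>C'. is_cycle E C' \<and> C' \<noteq> C \<longrightarrow>
      \<delta> * gap_norm E C C' < mean_weight r C' - mean_weight r C)" by blast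
next
  assume "is_cycle E C \<and> (\<forall>C'. is_cycle E C' \<and> C' \<noteq> C \<longrightarrow>
      \<delta> * gap_norm E C C' < mean_weight r C' - mean_weight r C)"
  then show "ball1 E r \<delta> \<subseteq> PC E C"
    unfolding PC_def using ball1_mean_weight_less[OF is_cycle_subset is_cycle_subset assms(1,2)] by blast
qed

section \<open>Near ties\<close>

definition cycles_through :: "edge set \<Rightarrow> edge \<Rightarrow> edge set set" where
  "cycles_through E e = {C. is_cycle E C \<and> e \<in> C}"

definition cycles_avoiding :: "edge set \<Rightarrow> edge \<Rightarrow> edge set set" where
  "cycles_avoiding E e = {C. is_cycle E C \<and> e \<notin> C}"

definition min_mean_weight :: "(edge \<Rightarrow> real) \<Rightarrow> edge set set \<Rightarrow> real" where
  "min_mean_weight r \<C> = Min (mean_weight r ` \<C>)"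

definition near_tie :: "edge set \<Rightarrow> real \<Rightarrow> edge \<Rightarrow> (edge \<Rightarrow> real) \<Rightarrow> bool" where
  "near_tie E \<delta> e r \<longleftrightarrow> cycles_avoiding E e \<noteq> {} \<and> cycles_through E e \<noteq> {} \<and>
     \<bar>min_mean_weight r (cycles_avoiding E e) - min_mean_weight r (cycles_through E e)\<bar> \<le> \<delta>"

lemma finite_cycles_through: "finite E \<Longrightarrow> finite (cycles_through E e)"
  unfolding cycles_through_def by (rule finite_subset[OF _ finite_cycles]) auto

lemma finite_cycles_avoiding: "finite E \<Longrightarrow> finite (cycles_avoiding E e)"
  unfolding cycles_avoiding_def by (rule finite_subset[OF _ finite_cycles]) auto

lemma min_mean_weight_le: "finite \<C> \<Longrightarrow> C \<in> \<C> \<Longrightarrow> min_mean_weight r \<C> \<le> mean_weight r C"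
  unfolding min_mean_weight_def by simp

lemma min_mean_weight_ge:
  "finite \<C> \<Longrightarrow> \<C> \<noteq> {} \<Longrightarrow> (\<And>C. C \<in> \<C> \<Longrightarrow> \<mu> \<le> mean_weight r C) \<Longrightarrow> \<mu> \<le> min_mean_weight r \<C>"
  unfolding min_mean_weight_def by simp

lemma min_mean_weight_attained:
  "finite \<C> \<Longrightarrow> \<C> \<noteq> {} \<Longrightarrow> \<exists>C\<in>\<C>. mean_weight r C = min_mean_weight r \<C>"
  unfolding min_mean_weight_def using Min_in[of "mean_weight r ` \<C>"] by (metis empty_is_image finite_imageI imageE)

lemma near_tieI:
  assumes fin: "finite E" and avoid: "C \<in> cycles_avoiding E e" and through: "C' \<in> cycles_through E e"
    and lower: "\<And>D. is_cycle E D \<Longrightarrow> \<mu> \<le> mean_weight r D"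
    and close: "mean_weight r C \<le> \<mu> + \<delta>" "mean_weight r C' \<le> \<mu> + \<delta>"
  shows "near_tie E \<delta> e r"
proof -
  have "\<mu> \<le> min_mean_weight r (cycles_avoiding E e)"
    by (rule min_mean_weight_ge[OF finite_cycles_avoiding[OF fin]])
      (use avoid lower in \<open>auto simp: cycles_avoiding_def\<close>)
  moreover have "\<mu> \<le> min_mean_weight r (cycles_through E e)"
    by (rule min_mean_weight_ge[OF finite_cycles_through[OF fin]])
      (use through lower in \<open>auto simp: cycles_through_def\<close>)
  moreover have "min_mean_weight r (cycles_avoiding E e) \<le> \<mu> + \<delta>"
    using min_mean_weight_le[OF finite_cycles_avoiding[OF fin] avoid, where r = r] close(1) by simp
  moreover have "min_mean_weight r (cycles_through E e) \<le> \<mu> + \<delta>"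
    using min_mean_weight_le[OF finite_cycles_through[OF fin] through, where r = r] close(2) by simp
  ultimately show ?thesis using avoid through unfolding near_tie_def by auto
qed

lemma near_tie_if_not_stable:
  assumes fin: "finite E" and "E \<noteq> {}" "\<delta> \<ge> 0" and "\<exists>C. is_cycle E C"
    and not_stable: "\<not> (\<exists>C. is_cycle E C \<and> ball1 E r \<delta> \<subseteq> PC E C)"
  shows "\<exists>e\<in>E. near_tie E \<delta> e r"
proof -
  obtain C0 where C0: "is_cycle E C0" "mean_weight r C0 = min_mean_weight r {C. is_cycle E C}"
    using min_mean_weight_attained[OF finite_cycles[OF fin]] assms(4) by auto
  have lower: "mean_weight r C0 \<le> mean_weight r D" if "is_cycle E D" for D
    using C0(2) min_mean_weight_le[OF finite_cycles[OF fin]] that by simp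
  obtain C1 where C1: "is_cycle E C1" "C1 \<noteq> C0"
    and "\<not> \<delta> * gap_norm E C0 C1 < mean_weight r C1 - mean_weight r C0"
    using not_stable C0(1) ball1_subset_PC_iff[OF assms(1-3)] by blast
  moreover have "\<delta> * gap_norm E C0 C1 \<le> \<delta>"
    using gap_norm_le_1[OF assms(1,2)] \<open>\<delta> \<ge> 0\<close> by (simp add: mult_left_le)
  ultimately have close: "mean_weight r C1 \<le> mean_weight r C0 + \<delta>" by linarith
  obtain e where "e \<in> E" "e \<in> C0 \<and> e \<notin> C1 \<or> e \<in> C1 \<and> e \<notin> C0"
    using C0(1) C1 is_cycle_subset by blast
  then show ?thesis
    using near_tieI[OF fin _ _ lower, of C1 e C0] near_tieI[OF fin _ _ lower, of C0 e C1]
      C0(1) C1(1) close \<open>\<delta> \<ge> 0\<close>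
    by (auto simp: cycles_avoiding_def cycles_through_def)
qed

lemma near_tie_cong:
  assumes "\<And>e'. e' \<in> E \<Longrightarrow> r e' = r' e'"
  shows "near_tie E \<delta> e r = near_tie E \<delta> e r'"
proof -
  have "mean_weight r C = mean_weight r' C" if "is_cycle E C" for C
    using that assms is_cycle_subset by (blast intro: mean_weight_cong)
  then have "mean_weight r ` cycles_avoiding E e = mean_weight r' ` cycles_avoiding E e"
    "mean_weight r ` cycles_through E e = mean_weight r' ` cycles_through E e"
    unfolding cycles_avoiding_def cycles_through_def by (auto intro: image_cong)
  then show ?thesis unfolding near_tie_def min_mean_weight_def by simp
qed

lemma near_tie_section_diameter:
  assumes E: "E \<subseteq> {..<n} \<times> {..<n}"
    and t: "near_tie E \<delta> e (r(e := t))" and t': "near_tie E \<delta> e (r(e := t'))" and "t \<le> t'"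
  shows "t' - t \<le> 2 * real n * \<delta>"
proof -
  have fin: "finite E" using E finite_subset by blast
  let ?A = "cycles_avoiding E e" and ?T = "cycles_through E e"
  have "min_mean_weight (r(e := t)) ?A = min_mean_weight (r(e := t')) ?A"
    unfolding min_mean_weight_def cycles_avoiding_def
    by (intro arg_cong[where f = Min] image_cong refl mean_weight_cong) auto
  obtain C where C: "C \<in> ?T" "mean_weight (r(e := t')) C = min_mean_weight (r(e := t')) ?T"
    using min_mean_weight_attained[OF finite_cycles_through[OF fin]] t' unfolding near_tie_def by blast
  have "is_cycle E C" "e \<in> C" using C(1) unfolding cycles_through_def by auto
  then have "0 < card C" "card C \<le> n"
    using is_cycle_card_pos is_cycle_card_le[OF _ E] by auto
  then have "(t' - t) / real n \<le> (t' - t) / real (card C)"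
    using \<open>t \<le> t'\<close> by (intro divide_left_mono) auto
  moreover have "mean_weight (r(e := t')) C = mean_weight (r(e := t)) C + (t' - t) / real (card C)"
    using mean_weight_fun_upd \<open>e \<in> C\<close> is_cycle_finite[OF \<open>is_cycle E C\<close>] by blast
  moreover have "min_mean_weight (r(e := t)) ?T \<le> mean_weight (r(e := t)) C"
    using min_mean_weight_le[OF finite_cycles_through[OF fin] C(1)] .
  ultimately have "(t' - t) / real n \<le> 2 * \<delta>"
    using t t' C(2) \<open>min_mean_weight (r(e := t)) ?A = _\<close> unfolding near_tie_def by linarith
  then show ?thesis using \<open>0 < card C\<close> \<open>card C \<le> n\<close> by (simp add: divide_le_eq algebra_simps)
qed

section \<open>Probability bounds\<close>

lemma measurable_mean_weight:
  "(\<And>e. e \<in> C \<Longrightarrow> (\<lambda>x. r x e) \<in> borel_measurable L) \<Longrightarrow> (\<lambda>x. mean_weight (r x) C) \<in> borel_measurable L"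
  unfolding mean_weight_def by (intro borel_measurable_divide borel_measurable_sum) auto

lemma sets_near_tie:
  assumes fin: "finite E" and r: "\<And>e'. e' \<in> E \<Longrightarrow> (\<lambda>x. r x e') \<in> borel_measurable L"
  shows "{x \<in> space L. near_tie E \<delta> e (r x)} \<in> sets L"
proof -
  have min: "(\<lambda>x. min_mean_weight (r x) \<C>) \<in> borel_measurable L"
    if "finite \<C>" "\<C> \<subseteq> {C. is_cycle E C}" for \<C>
    unfolding min_mean_weight_def using that r is_cycle_subset
    by (intro borel_measurable_Min measurable_mean_weight) blast+
  have "(\<lambda>x. min_mean_weight (r x) (cycles_avoiding E e)) \<in> borel_measurable L"
    by (rule min[OF finite_cycles_avoiding[OF fin]]) (auto simp: cycles_avoiding_def)
  moreover have "(\<lambda>x. min_mean_weight (r x) (cycles_through E e)) \<in> borel_measurable L"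
    by (rule min[OF finite_cycles_through[OF fin]]) (auto simp: cycles_through_def)
  ultimately have "(\<lambda>x. \<bar>min_mean_weight (r x) (cycles_avoiding E e) - min_mean_weight (r x) (cycles_through E e)\<bar>)
      \<in> borel_measurable L"
    by measurable
  then show ?thesis unfolding near_tie_def by (cases "cycles_avoiding E e = {} \<or> cycles_through E e = {}") auto
qed

lemma sets_stable_cycle:
  assumes fin: "finite E" and "E \<noteq> {}" "\<delta> \<ge> 0"
    and r: "\<And>e'. e' \<in> E \<Longrightarrow> (\<lambda>x. r x e') \<in> borel_measurable L"
  shows "{x \<in> space L. \<exists>C. is_cycle E C \<and> ball1 E (r x) \<delta> \<subseteq> PC E C} \<in> sets L"
proof -
  let ?Cy = "{C. is_cycle E C}"
  have "{x \<in> space L. \<exists>C\<in>?Cy. \<forall>C'\<in>?Cy. C' \<noteq> C \<longrightarrow>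
      \<delta> * gap_norm E C C' < mean_weight (r x) C' - mean_weight (r x) C} \<in> sets L"
  proof (intro sets.sets_Collect_finite_Ex sets.sets_Collect_finite_All finite_cycles[OF fin])
    fix C C' assume "C \<in> ?Cy" "C' \<in> ?Cy"
    then have "(\<lambda>x. mean_weight (r x) D) \<in> borel_measurable L" if "D \<in> {C, C'}" for D
      using that r is_cycle_subset by (blast intro: measurable_mean_weight)
    then show "{x \<in> space L. C' \<noteq> C \<longrightarrow>
        \<delta> * gap_norm E C C' < mean_weight (r x) C' - mean_weight (r x) C} \<in> sets L"
      by measurable
  qed
  moreover have "{x \<in> space L. \<exists>C. is_cycle E C \<and> ball1 E (r x) \<delta> \<subseteq> PC E C} =
    {x \<in> space L. \<exists>C\<in>?Cy. \<forall>C'\<in>?Cy. C' \<noteq> C \<longrightarrow>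
      \<delta> * gap_norm E C C' < mean_weight (r x) C' - mean_weight (r x) C}"
    unfolding ball1_subset_PC_iff[OF assms(1-3)] by blast
  ultimately show ?thesis by simp
qed

lemma emeasure_lborel_le_diameter:
  fixes T :: "real set"
  assumes diam: "\<And>t t'. t \<in> T \<Longrightarrow> t' \<in> T \<Longrightarrow> t \<le> t' \<Longrightarrow> t' - t \<le> d" and "d \<ge> 0"
  shows "emeasure lborel T \<le> ennreal d"
proof (cases "T = {}")
  case False
  have lower: "t - d \<le> t'" if "t \<in> T" "t' \<in> T" for t t'
    using diam[OF that] diam[OF that(2,1)] \<open>d \<ge> 0\<close> by (cases "t \<le> t'") auto
  then have "bdd_below T" using False by (meson bdd_belowI ex_in_conv)
  have "T \<subseteq> {Inf T .. Inf T + d}"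
  proof
    fix t assume "t \<in> T"
    then have "Inf T \<le> t" "t - d \<le> Inf T"
      using \<open>bdd_below T\<close> lower False by (auto intro: cInf_lower cInf_greatest)
    then show "t \<in> {Inf T .. Inf T + d}" by simp
  qed
  then have "emeasure lborel T \<le> emeasure lborel {Inf T .. Inf T + d}"
    by (intro emeasure_mono) auto
  then show ?thesis using \<open>d \<ge> 0\<close> by simp
qed simp

lemma emeasure_distr_le_density_bound:
  assumes "distributed M lborel Z g" and "\<And>y. g y \<le> ennreal \<phi>" and "T \<in> sets borel"
  shows "emeasure (distr M borel Z) T \<le> ennreal \<phi> * emeasure lborel T"
proof -
  have "distr M borel Z = density lborel g"
    using assms(1) unfolding distributed_def by (metis distr_cong sets_lborel)
  then have "emeasure (distr M borel Z) T = (\<integral>\<^sup>+x. g x * indicator T x \<partial>lborel)"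
    using assms(1,3) by (simp add: emeasure_density distributed_def)
  also have "\<dots> \<le> (\<integral>\<^sup>+x. ennreal \<phi> * indicator T x \<partial>lborel)"
    by (intro nn_integral_mono mult_right_mono assms(2)) auto
  also have "\<dots> = ennreal \<phi> * emeasure lborel T"
    using assms(3) by (simp add: nn_integral_cmult_indicator)
  finally show ?thesis .
qed

lemma (in prob_space) indep_var_emeasure_le_sections:
  assumes indep: "indep_var N Y K Z" and S: "S \<in> sets (N \<Otimes>\<^sub>M K)"
    and sections: "\<And>y. emeasure (distr M K Z) (Pair y -` S) \<le> c"
  shows "emeasure M {\<omega> \<in> space M. (Y \<omega>, Z \<omega>) \<in> S} \<le> c"
proof -
  have Y: "random_variable N Y" and Z: "random_variable K Z"
    and joint: "distr M N Y \<Otimes>\<^sub>M distr M K Z = distr M (N \<Otimes>\<^sub>M K) (\<lambda>x. (Y x, Z x))"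
    using indep unfolding indep_var_distribution_eq by auto
  interpret Y: prob_space "distr M N Y" by (rule prob_space_distr[OF Y])
  interpret Z: prob_space "distr M K Z" by (rule prob_space_distr[OF Z])
  have "{\<omega> \<in> space M. (Y \<omega>, Z \<omega>) \<in> S} = (\<lambda>x. (Y x, Z x)) -` S \<inter> space M" by auto
  then have "emeasure M {\<omega> \<in> space M. (Y \<omega>, Z \<omega>) \<in> S} = emeasure (distr M N Y \<Otimes>\<^sub>M distr M K Z) S"
    using S by (simp add: joint emeasure_distr measurable_Pair[OF Y Z])
  also have "\<dots> = (\<integral>\<^sup>+y. emeasure (distr M K Z) (Pair y -` S) \<partial>distr M N Y)"
    using S by (intro Z.emeasure_pair_measure_alt) simp
  also have "\<dots> \<le> (\<integral>\<^sup>+y. c \<partial>distr M N Y)"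
    by (intro nn_integral_mono sections)
  finally show ?thesis using Y.emeasure_space_1 by simp
qed

lemma emeasure_near_tie_fibre_le:
  assumes dist: "distributed M lborel Z g" and bound: "\<And>y. g y \<le> ennreal \<phi>" and "\<phi> \<ge> 0"
    and E: "E \<subseteq> {..<n} \<times> {..<n}" and "\<delta> \<ge> 0"
  shows "emeasure (distr M borel Z) {t. near_tie E \<delta> e (r(e := t))} \<le> ennreal (\<phi> * (2 * real n * \<delta>))"
proof -
  let ?T = "{t. near_tie E \<delta> e (r(e := t))}"
  have "finite E" using E finite_subset by blast
  then have T: "?T \<in> sets borel"
    using sets_near_tie[of E "\<lambda>t. r(e := t)" borel \<delta> e] by (simp add: fun_upd_def)
  have "emeasure (distr M borel Z) ?T \<le> ennreal \<phi> * emeasure lborel ?T"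
    by (rule emeasure_distr_le_density_bound[OF dist bound T])
  also have "\<dots> \<le> ennreal \<phi> * ennreal (2 * real n * \<delta>)"
    using near_tie_section_diameter[OF E] \<open>\<delta> \<ge> 0\<close>
    by (intro mult_left_mono emeasure_lborel_le_diameter) auto
  finally show ?thesis using \<open>\<phi> \<ge> 0\<close> \<open>\<delta> \<ge> 0\<close> by (simp add: ennreal_mult)
qed

lemma emeasure_distr_singleton_restrict:
  assumes "Z \<in> borel_measurable M" and A: "A \<in> sets (PiM {e} (\<lambda>_. borel :: real measure))"
  shows "emeasure (distr M (PiM {e} (\<lambda>_. borel)) (\<lambda>\<omega>. restrict (\<lambda>_. Z \<omega>) {e})) A =
    emeasure (distr M borel Z) {t. restrict (\<lambda>_. t) {e} \<in> A}"
proof -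
  have restrict: "(\<lambda>t::real. restrict (\<lambda>_. t) {e}) \<in> measurable borel (PiM {e} (\<lambda>_. borel))"
    by measurable
  then have "{t. restrict (\<lambda>_. t) {e} \<in> A} \<in> sets borel"
    using measurable_sets[OF restrict A] by (simp add: vimage_def)
  then show ?thesis
    using assms restrict by (simp add: emeasure_distr vimage_def)
qed

lemma prob_near_tie_le:
  fixes M :: "'a measure" and X :: "edge \<Rightarrow> 'a \<Rightarrow> real"
  assumes "prob_space M" and indep: "prob_space.indep_vars M (\<lambda>_. borel) X E"
    and dist: "distributed M lborel (X e) g" and bound: "\<And>y. g y \<le> ennreal \<phi>" and "\<phi> \<ge> 0"
    and E: "E \<subseteq> {..<n} \<times> {..<n}" and "e \<in> E" and "\<delta> \<ge> 0"
  shows "emeasure M {\<omega> \<in> space M. near_tie E \<delta> e (\<lambda>e'. X e' \<omega>)} \<le> ennreal (\<phi> * (2 * real n * \<delta>))"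
proof -
  interpret prob_space M by fact
  have fin: "finite E" using E finite_subset by blast
  define N where "N = PiM (E - {e}) (\<lambda>_. borel :: real measure)"
  define K where "K = PiM {e} (\<lambda>_. borel :: real measure)"
  define Y where "Y \<omega> = restrict (\<lambda>i. X i \<omega>) (E - {e})" for \<omega>
  \<comment> \<open>\<open>indep_var\<close> needs both variables in one type, so \<open>X e\<close> is seen as a function on \<open>{e}\<close>\<close>
  define Z where "Z \<omega> = restrict (\<lambda>_. X e \<omega>) {e}" for \<omega>
  define S where "S = {p \<in> space (N \<Otimes>\<^sub>M K). near_tie E \<delta> e ((fst p)(e := snd p e))}"
  have "restrict (\<lambda>i. X i \<omega>) {e} = Z \<omega>" for \<omega>
    by (auto simp: Z_def)
  then have indep_YZ: "indep_var N Y K Z"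
    using indep_var_restrict[OF indep, of "E - {e}" "{e}"] \<open>e \<in> E\<close>
    unfolding N_def K_def Y_def by auto
  have S: "S \<in> sets (N \<Otimes>\<^sub>M K)"
    unfolding S_def
  proof (rule sets_near_tie[OF fin])
    fix x assume "x \<in> E"
    then show "(\<lambda>p. ((fst p)(e := snd p e)) x) \<in> borel_measurable (N \<Otimes>\<^sub>M K)"
      unfolding N_def K_def by (cases "x = e") simp_all
  qed
  have "emeasure (distr M K Z) (Pair y -` S) \<le> ennreal (\<phi> * (2 * real n * \<delta>))" for y
  proof (cases "y \<in> space N")
    case True
    then have "{t. restrict (\<lambda>_. t) {e} \<in> Pair y -` S} = {t. near_tie E \<delta> e (y(e := t))}"
      by (auto simp: S_def K_def space_pair_measure space_PiM)
    moreover have "X e \<in> borel_measurable M" using dist by (simp add: distributed_def)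
    ultimately show ?thesis
      using emeasure_distr_singleton_restrict[OF _ sets_Pair1[OF S[unfolded K_def]], of "X e" M y]
        emeasure_near_tie_fibre_le[OF dist bound \<open>\<phi> \<ge> 0\<close> E \<open>\<delta> \<ge> 0\<close>]
      unfolding K_def Z_def by simp
  next
    case False
    then have "Pair y -` S = {}" by (auto simp: S_def space_pair_measure)
    then show ?thesis by simp
  qed
  then have "emeasure M {\<omega> \<in> space M. (Y \<omega>, Z \<omega>) \<in> S} \<le> ennreal (\<phi> * (2 * real n * \<delta>))"
    by (rule indep_var_emeasure_le_sections[OF indep_YZ S])
  moreover have pair: "(\<lambda>\<omega>. (Y \<omega>, Z \<omega>)) \<in> measurable M (N \<Otimes>\<^sub>M K)"
    using indep_var_rv1[OF indep_YZ] indep_var_rv2[OF indep_YZ] by (rule measurable_Pair)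
  have "near_tie E \<delta> e (\<lambda>e'. X e' \<omega>) \<longleftrightarrow> (Y \<omega>, Z \<omega>) \<in> S" if "\<omega> \<in> space M" for \<omega>
  proof -
    have "near_tie E \<delta> e (\<lambda>e'. X e' \<omega>) = near_tie E \<delta> e ((Y \<omega>)(e := Z \<omega> e))"
      by (rule near_tie_cong) (auto simp: Y_def Z_def)
    then show ?thesis using measurable_space[OF pair that] unfolding S_def by simp
  qed
  then have "{\<omega> \<in> space M. near_tie E \<delta> e (\<lambda>e'. X e' \<omega>)} = {\<omega> \<in> space M. (Y \<omega>, Z \<omega>) \<in> S}"
    by blast
  ultimately show ?thesis by simp
qed

lemma prob_stable_cycle_ge:
  fixes M :: "'a measure" and X :: "edge \<Rightarrow> 'a \<Rightarrow> real" and f :: "edge \<Rightarrow> real \<Rightarrow> ennreal"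
  assumes "n \<ge> 1" and E: "E \<subseteq> {..<n} \<times> {..<n}" and out: "\<forall>i<n. \<exists>j. (i, j) \<in> E"
    and P: "prob_space M" and indep: "prob_space.indep_vars M (\<lambda>_. borel) X E"
    and dens: "\<forall>e\<in>E. distributed M lborel (X e) (f e)" and bound: "\<forall>e\<in>E. \<forall>y. f e y \<le> ennreal \<phi>"
    and \<phi>: "\<phi> \<ge> 0" and \<delta>: "\<delta> \<ge> 0"
  shows "measure M {\<omega> \<in> space M. \<exists>C. is_cycle E C \<and> ball1 E (\<lambda>e. X e \<omega>) \<delta> \<subseteq> PC E C}
    \<ge> 1 - real (card E) * (\<phi> * (2 * real n * \<delta>))"
proof -
  interpret prob_space M by (rule P)
  have fin: "finite E" using E finite_subset by blast
  have "E \<noteq> {}" using out \<open>n \<ge> 1\<close> by auto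
  have X: "X e \<in> borel_measurable M" if "e \<in> E" for e
    using dens that by (auto simp: distributed_def)
  define G where "G = {\<omega> \<in> space M. \<exists>C. is_cycle E C \<and> ball1 E (\<lambda>e. X e \<omega>) \<delta> \<subseteq> PC E C}"
  define D where "D e = {\<omega> \<in> space M. near_tie E \<delta> e (\<lambda>e'. X e' \<omega>)}" for e
  have "G \<in> events" unfolding G_def using X by (intro sets_stable_cycle[OF fin \<open>E \<noteq> {}\<close> \<delta>]) auto
  have D: "D e \<in> events" for e unfolding D_def using X by (intro sets_near_tie[OF fin]) auto
  have "space M - G \<subseteq> (\<Union>e\<in>E. D e)"
    using near_tie_if_not_stable[OF fin \<open>E \<noteq> {}\<close> \<delta> exists_cycle[OF E \<open>n \<ge> 1\<close> out]]
    unfolding G_def D_def by blast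
  then have "prob (space M - G) \<le> prob (\<Union>e\<in>E. D e)"
    using D fin by (intro finite_measure_mono) auto
  also have "\<dots> \<le> (\<Sum>e\<in>E. prob (D e))"
    using D fin by (intro finite_measure_subadditive_finite) auto
  also have "\<dots> \<le> (\<Sum>e\<in>E. \<phi> * (2 * real n * \<delta>))"
  proof (rule sum_mono)
    fix e assume "e \<in> E"
    then have "emeasure M (D e) \<le> ennreal (\<phi> * (2 * real n * \<delta>))"
      unfolding D_def using dens bound \<phi> \<delta>
      by (intro prob_near_tie_le[OF P indep _ _ _ E]) auto
    then show "prob (D e) \<le> \<phi> * (2 * real n * \<delta>)"
      using \<phi> \<delta> by (simp add: emeasure_eq_measure ennreal_le_iff)
  qed
  finally show ?thesis using prob_compl[OF \<open>G \<in> events\<close>] unfolding G_def by simp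
qed

theorem mainTheorem4:
  fixes n :: nat and E :: "edge set" and \<phi> :: real
    and M :: "'a measure" and X :: "edge \<Rightarrow> 'a \<Rightarrow> real" and f :: "edge \<Rightarrow> real \<Rightarrow> ennreal"
  assumes n_pos: "n \<ge> 1"
    and E_sub: "E \<subseteq> {..<n} \<times> {..<n}"
    and out_edge: "\<forall>i<n. \<exists>j. (i, j) \<in> E"
    and strongly_connected: "\<forall>i<n. \<forall>j<n. (i, j) \<in> E\<^sup>*"
    and P: "prob_space M"
    and indep: "prob_space.indep_vars M (\<lambda>_. borel) X E"
    and dens: "\<forall>e\<in>E. distributed M lborel (X e) (f e)"
    and bound: "\<forall>e\<in>E. \<forall>y. f e y \<le> ennreal \<phi>"
    and phi_pos: "\<phi> > 0"
  shows "measure M {\<omega> \<in> space M. \<exists>C. is_cycle E C \<and>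
            ball1 E (\<lambda>e. X e \<omega>) (1 / (2 * real n ^ 2 * real (card E) * \<phi>)) \<subseteq> PC E C}
         \<ge> 1 - 1 / real n"
proof -
  define \<delta> where "\<delta> = 1 / (2 * real n ^ 2 * real (card E) * \<phi>)"
  have "card E > 0"
    using E_sub out_edge n_pos finite_subset[OF E_sub] by (auto simp: card_gt_0_iff)
  then have "real (card E) * (\<phi> * (2 * real n * \<delta>)) = 1 / real n"
    unfolding \<delta>_def using phi_pos n_pos by (simp add: field_simps power2_eq_square)
  moreover have "\<delta> \<ge> 0" unfolding \<delta>_def using phi_pos by simp
  ultimately show ?thesis
    using prob_stable_cycle_ge[OF n_pos E_sub out_edge P indep dens bound, of \<delta>] phi_pos
    unfolding \<delta>_def by simp
qed

end
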